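(* Let $-1<\gamma<1$, $d>0$, $k>0$, $\alpha\in\mathbb{R}$, $\delta\in[0,2\pi)$, and let $$I(\phi)=\frac{1}{1+e^{k\left(\cos(\delta/2)-\cos(\phi-\alpha-\delta/2)\right)}}.$$ Consider the system $$\dot\phi_1=\gamma-\sin\phi_1+d\,I(\phi_2),\qquad \dot\phi_2=\gamma-\sin\phi_2+d\,I(\phi_1)$$ on the torus $(\mathbb{R}/2\pi\mathbb{Z})^2$. Then every equilibrium $(\phi_1,\phi_2)$ satisfies $\arcsin\gamma<\phi_{1,2}<\pi-\arcsin\gamma$, where each $\phi_i$ is taken modulo $2\pi$ as a point of the arc $(\arcsin\gamma,\ \arcsin\gamma+2\pi)$.
   Context: $\arcsin$ denotes the principal branch with values in $[-\pi/2,\pi/2]$. *)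

theory Defs
  imports Complex_Main
begin

definition coupling :: "real \<Rightarrow> real \<Rightarrow> real \<Rightarrow> real \<Rightarrow> real" where
  "coupling k \<alpha> \<delta> \<phi> = 1 / (1 + exp (k * (cos (\<delta>/2) - cos (\<phi> - \<alpha> - \<delta>/2))))"

text \<open>Vector field of the system (as 2pi-periodic functions on R^2, i.e. on the torus).\<close>
definition field1 :: "real \<Rightarrow> real \<Rightarrow> real \<Rightarrow> real \<Rightarrow> real \<Rightarrow> real \<Rightarrow> real \<Rightarrow> real" where
  "field1 \<gamma> d k \<alpha> \<delta> \<phi>1 \<phi>2 = \<gamma> - sin \<phi>1 + d * coupling k \<alpha> \<delta> \<phi>2"

definition is_equilibrium :: "real \<Rightarrow> real \<Rightarrow> real \<Rightarrow> real \<Rightarrow> real \<Rightarrow> real \<Rightarrow> real \<Rightarrow> bool" where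
  "is_equilibrium \<gamma> d k \<alpha> \<delta> \<phi>1 \<phi>2 \<longleftrightarrow>
     field1 \<gamma> d k \<alpha> \<delta> \<phi>1 \<phi>2 = 0 \<and> field1 \<gamma> d k \<alpha> \<delta> \<phi>2 \<phi>1 = 0"

end

theory Submission
  imports Defs
begin

text \<open>The coupling term is positive, so at an equilibrium \<open>sin \<phi>\<^sub>i = \<gamma> + d I(\<phi>\<^sub>j) > \<gamma>\<close>.
  On the arc \<open>(arcsin \<gamma>, arcsin \<gamma> + 2\<pi>)\<close> the set where \<open>sin > \<gamma>\<close> is exactly
  \<open>(arcsin \<gamma>, \<pi> - arcsin \<gamma>)\<close>, which gives the bound.\<close>

lemma coupling_pos: "coupling k \<alpha> \<delta> \<phi> > 0"
  unfolding coupling_def by (simp add: add_pos_pos)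

lemma equilibrium_sin_gt:
  assumes "d > 0" and "is_equilibrium \<gamma> d k \<alpha> \<delta> \<phi>1 \<phi>2"
  shows "\<gamma> < sin \<phi>1" and "\<gamma> < sin \<phi>2"
proof -
  have "d * coupling k \<alpha> \<delta> \<phi>1 > 0" "d * coupling k \<alpha> \<delta> \<phi>2 > 0"
    using assms(1) coupling_pos by simp_all
  then show "\<gamma> < sin \<phi>1" "\<gamma> < sin \<phi>2"
    using assms(2) unfolding is_equilibrium_def field1_def by linarith+
qed

lemma less_pi_minus_arcsin_if_sin_gt:
  fixes \<gamma> \<psi> :: real
  assumes "-1 \<le> \<gamma>" "\<gamma> \<le> 1" and "\<gamma> < sin \<psi>" and "\<psi> < arcsin \<gamma> + 2 * pi"
  shows "\<psi> < pi - arcsin \<gamma>"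
proof (rule ccontr)
  assume "\<not> \<psi> < pi - arcsin \<gamma>"
  then have above: "pi - arcsin \<gamma> \<le> \<psi>" by simp
  define a where "a = arcsin \<gamma>"
  have a_bounds: "-(pi/2) \<le> a" "a \<le> pi/2"
    unfolding a_def using arcsin_bounded assms(1,2) by auto
  have sin_a: "sin a = \<gamma>"
    unfolding a_def using assms(1,2) by simp
  show False
  proof (cases "\<psi> \<le> 3*pi/2")
    case True
    have "sin (-a) \<le> sin (\<psi> - pi)"
      by (rule sin_monotone_2pi_le) (use True above a_bounds a_def in auto)
    then show False using sin_a assms(3) by (simp add: sin_diff)
  next
    case False
    have "sin (\<psi> - 2*pi) \<le> sin a"
      by (rule sin_monotone_2pi_le) (use False assms(4) a_bounds a_def in auto)
    then show False using sin_a assms(3) by (simp add: sin_diff)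
  qed
qed

theorem mainTheorem5:
  fixes \<gamma> d k \<alpha> \<delta> \<phi>1 \<phi>2 :: real
  assumes "-1 < \<gamma>" "\<gamma> < 1" "d > 0" "k > 0" "0 \<le> \<delta>" "\<delta> < 2 * pi"
    and "is_equilibrium \<gamma> d k \<alpha> \<delta> \<phi>1 \<phi>2"
  shows "\<forall>\<phi> \<in> {\<phi>1, \<phi>2}. \<forall>\<psi> (m::int).
           \<psi> = \<phi> + 2 * pi * of_int m \<and> arcsin \<gamma> < \<psi> \<and> \<psi> < arcsin \<gamma> + 2 * pi
           \<longrightarrow> arcsin \<gamma> < \<psi> \<and> \<psi> < pi - arcsin \<gamma>"
proof (intro ballI allI impI conjI)
  fix \<phi> \<psi> and m :: int
  assume \<phi>: "\<phi> \<in> {\<phi>1, \<phi>2}"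
    and \<psi>: "\<psi> = \<phi> + 2 * pi * of_int m \<and> arcsin \<gamma> < \<psi> \<and> \<psi> < arcsin \<gamma> + 2 * pi"
  show "arcsin \<gamma> < \<psi>" using \<psi> by simp
  have "\<gamma> < sin \<phi>"
    using \<phi> equilibrium_sin_gt[OF assms(3,7)] by auto
  also have "sin \<phi> = sin \<psi>"
    using \<psi> by (simp add: sin_add)
  finally show "\<psi> < pi - arcsin \<gamma>"
    using less_pi_minus_arcsin_if_sin_gt assms(1,2) \<psi> by simp
qed

end
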